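(* Let $f_0,f_2>0$, let $0<\Lambda_1<\Lambda_{in}$, and let $\mathfrak{c}:[\Lambda_1,\Lambda_{in}]\to\mathbb{R}$ be continuous with $192 f_2\Lambda^2-2f_0\mathfrak{c}(\Lambda)\neq 0$ for all $\Lambda$. Define $$G_{\rm eff}(\Lambda)=\frac{3\pi}{192 f_2\Lambda^2-2f_0\,\mathfrak{c}(\Lambda)} .$$ Let $h:[\Lambda_1,\Lambda_{in}]\to\mathbb{R}$ be continuous with $1-\tfrac{4\pi}{3}G_{\rm eff}(\Lambda)h(\Lambda)\neq 0$, and define $G_{{\rm eff},H}(\Lambda)=\dfrac{G_{\rm eff}(\Lambda)}{1-\frac{4\pi}{3}G_{\rm eff}(\Lambda)h(\Lambda)}$. Use the time–energy relation $\Lambda=t^{-1/2}$ (so $t\in[\Lambda_{in}^{-2},\Lambda_1^{-2}]$), and for a function $\mathcal{M}$ of $t$ write $\mathcal{M}(\Lambda):=\mathcal{M}(t)$ at $t=\Lambda^{-2}$. (a) (No gravitational memory.) If $\mathcal{M}:[\Lambda_{in}^{-2},\Lambda_1^{-2}]\to(0,\infty)$ is differentiable and satisfies $\dfrac{d\mathcal{M}}{dt}=-\big(G_{\rm eff}(t^{-1/2})\,\mathcal{M}(t)\big)^{-2}$, then for every $\Lambda\in[\Lambda_1,\Lambda_{in}]$ $$\mathcal{M}(\Lambda)=\sqrt[3]{\mathcal{M}^3(\Lambda_{in})-\frac{2}{3\pi^2}\int_\Lambda^{\Lambda_{in}}\frac{(192 f_2x^2-2f_0\mathfrak{c}(x))^2}{x^3}\,dx}.$$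 (b) (Gravitational memory.) If $\mathcal{M}:[\Lambda_{in}^{-2},\Lambda_1^{-2}]\to(0,\infty)$ is differentiable and satisfies $\dfrac{d\mathcal{M}}{dt}=-\big(G_{{\rm eff},H}(t^{-1/2})\,\mathcal{M}(t)\big)^{-2}$, then for every $\Lambda\in[\Lambda_1,\Lambda_{in}]$ $$\mathcal{M}(\Lambda)=\sqrt[3]{\mathcal{M}^3(\Lambda_{in})-6\int_\Lambda^{\Lambda_{in}}\frac{\big(1-\frac{4\pi}{3}G_{\rm eff}(x)h(x)\big)^2}{x^3\,G_{\rm eff}(x)^2}\,dx}.$$
   Context: Physical interpretation: $\mathcal{M}$ is the mass of a primordial black hole evaporating by Hawking radiation in the radiation-dominated era ($a(t)=t^{1/2}$, energy $\Lambda=1/a(t)$), $\Lambda_{in}$ the energy at which this era begins. $G_{\rm eff}$ is the effective gravitational constant of the noncommutative geometry model, with $\mathfrak{c}(\Lambda)=\mathrm{Tr}(MM^\dagger)$ the renormalization-group-running trace of the squared Majorana mass matrix, and $h(\Lambda)$ plays the role of $|H|^2$ for a (nearly constant) Higgs field $H$; in the paper it is taken to be $|H|^2\sim\mu_0^2/(2\lambda_0)$. $G_{{\rm eff},H}$ is the effective gravitational constant modified by the conformal coupling $-\frac1{12}\int R|H|^2$ to the Higgs field. *)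

theory Defs
  imports "HOL-Analysis.Analysis"
begin

definition G_eff :: "real \<Rightarrow> real \<Rightarrow> (real \<Rightarrow> real) \<Rightarrow> real \<Rightarrow> real" where
  "G_eff f0 f2 c \<Lambda> = 3 * pi / (192 * f2 * \<Lambda>^2 - 2 * f0 * c \<Lambda>)"

definition G_effH :: "real \<Rightarrow> real \<Rightarrow> (real \<Rightarrow> real) \<Rightarrow> (real \<Rightarrow> real) \<Rightarrow> real \<Rightarrow> real" where
  "G_effH f0 f2 c h \<Lambda> = G_eff f0 f2 c \<Lambda> / (1 - 4 * pi / 3 * G_eff f0 f2 c \<Lambda> * h \<Lambda>)"

end

theory Submission imports Defs begin

text \<open>Under \<open>t = 1/\<Lambda>\<^sup>2\<close> the equation \<open>dM/dt = -1/(G M)\<^sup>2\<close> becomes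
  \<open>d(M\<^sup>3)/d\<Lambda> = 6/(\<Lambda>\<^sup>3 G(\<Lambda>)\<^sup>2)\<close>, so \<open>M\<^sup>3(\<Lambda>) + 6 \<integral>\<^sub>\<Lambda>\<^sup>\<Lambda>\<^sub>i\<^sub>n 1/(x\<^sup>3 G(x)\<^sup>2) dx\<close> is constant
  in \<open>\<Lambda>\<close>; evaluating at \<open>\<Lambda>\<^sub>i\<^sub>n\<close> and taking the (positive) cube root gives both formulas,
  which differ only in the expression for \<open>1/G\<^sup>2\<close>.\<close>

lemma inverse_square_mem_reciprocal_interval:
  fixes a b x :: real
  assumes "0 < a" and "x \<in> {a..b}"
  shows "1 / x^2 \<in> {1 / b^2 .. 1 / a^2}"
  using assms by (auto simp: divide_simps power_mono)

lemma has_real_derivative_cube_comp_inverse_square: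
  fixes M G :: "real \<Rightarrow> real" and x :: real
  assumes x: "0 < x" and M_nz: "M (1 / x^2) \<noteq> 0"
    and M_deriv: "(M has_real_derivative - inverse ((G x * M (1 / x^2))^2)) (at (1 / x^2) within T)"
    and image: "(\<lambda>x. 1 / x^2) ` S \<subseteq> T"
  shows "((\<lambda>x. M (1 / x^2) ^ 3) has_real_derivative 6 * (inverse (G x ^ 2) / x^3)) (at x within S)"
proof -
  have "((\<lambda>x. 1 / x^2) has_real_derivative - 2 / x^3) (at x within S)"
    using x by (auto intro!: derivative_eq_intros simp: field_simps power2_eq_square power3_eq_cube)
  from DERIV_image_chain[OF has_field_derivative_subset[OF M_deriv image] this]
  have "((\<lambda>x. M (1 / x^2)) has_real_derivative
          - inverse ((G x * M (1 / x^2))^2) * (- 2 / x^3)) (at x within S)"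
    by (simp add: o_def)
  from DERIV_power[OF this, of 3] show ?thesis
    using M_nz by (simp add: field_simps power_mult_distrib)
qed

lemma mass_eq_root_integral:
  fixes a b L :: real and M G :: "real \<Rightarrow> real"
  assumes ab: "0 < a" "a < b"
    and G_cont: "continuous_on {a..b} (\<lambda>x. inverse (G x ^ 2))"
    and M: "\<forall>t\<in>{1 / b^2 .. 1 / a^2}. M t > 0 \<and>
       (M has_real_derivative - inverse ((G (1 / sqrt t) * M t)^2)) (at t within {1 / b^2 .. 1 / a^2})"
    and L: "L \<in> {a..b}"
  shows "M (1 / L^2) = root 3 (M (1 / b^2) ^ 3 - 6 * integral {L..b} (\<lambda>x. inverse (G x ^ 2) / x^3))"
proof -
  let ?f = "\<lambda>x. inverse (G x ^ 2) / x^3"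
  have f_cont: "continuous_on {a..b} ?f"
    using ab by (intro continuous_intros G_cont) auto
  define F where "F x = M (1 / x^2) ^ 3 + 6 * integral {x..b} ?f" for x
  have "(F has_real_derivative 0) (at x within {a..b})" if x: "x \<in> {a..b}" for x
  proof -
    have x_pos: "0 < x" using x ab by auto
    have sqrt_eq: "1 / sqrt (1 / x^2) = x"
      using x_pos by (simp add: real_sqrt_divide)
    have "M (1 / x^2) > 0" and
      "(M has_real_derivative - inverse ((G x * M (1 / x^2))^2)) (at (1 / x^2) within {1 / b^2 .. 1 / a^2})"
      using bspec[OF M inverse_square_mem_reciprocal_interval[OF ab(1) x]] unfolding sqrt_eq by auto
    then have "((\<lambda>x. M (1 / x^2) ^ 3) has_real_derivative 6 * ?f x) (at x within {a..b})"
      using inverse_square_mem_reciprocal_interval[OF ab(1)]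
      by (intro has_real_derivative_cube_comp_inverse_square[OF x_pos]) auto
    from DERIV_add[OF this DERIV_cmult[OF integral_has_real_derivative'[OF f_cont x], of 6]]
    show ?thesis unfolding F_def by simp
  qed
  then obtain k where "\<forall>x\<in>{a..b}. F x = k"
    using has_field_derivative_zero_constant[of "{a..b}" F] by auto
  then have "F L = F b"
    using L ab by auto
  then have "M (1 / L^2) ^ 3 = M (1 / b^2) ^ 3 - 6 * integral {L..b} ?f"
    by (simp add: F_def)
  moreover have "M (1 / L^2) > 0"
    using M inverse_square_mem_reciprocal_interval[OF ab(1) L] by auto
  ultimately show ?thesis
    by (metis less_imp_le real_root_power_cancel zero_less_numeral)
qed

text \<open>Both identities hold unconditionally because \<open>x / 0 = 0\<close> and \<open>inverse 0 = 0\<close>.\<close>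

lemma inverse_G_eff_square:
  "inverse (G_eff f0 f2 c x ^ 2) = (192 * f2 * x^2 - 2 * f0 * c x)^2 / (9 * pi^2)"
  by (simp add: G_eff_def power_divide field_simps)

lemma inverse_G_effH_square:
  "inverse (G_effH f0 f2 c h x ^ 2) = (1 - 4 * pi / 3 * G_eff f0 f2 c x * h x)^2 / G_eff f0 f2 c x ^ 2"
  by (simp add: G_effH_def power_divide)

theorem proposition4p7:
  fixes f0 f2 \<Lambda>1 \<Lambda>in :: real and c h :: "real \<Rightarrow> real"
  assumes f0: "f0 > 0" and f2: "f2 > 0"
    and L1: "0 < \<Lambda>1" and L1in: "\<Lambda>1 < \<Lambda>in"
    and c_cont: "continuous_on {\<Lambda>1..\<Lambda>in} c"
    and c_nz: "\<forall>\<Lambda>\<in>{\<Lambda>1..\<Lambda>in}. 192 * f2 * \<Lambda>^2 - 2 * f0 * c \<Lambda> \<noteq> 0"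
    and h_cont: "continuous_on {\<Lambda>1..\<Lambda>in} h"
    and h_nz: "\<forall>\<Lambda>\<in>{\<Lambda>1..\<Lambda>in}. 1 - 4 * pi / 3 * G_eff f0 f2 c \<Lambda> * h \<Lambda> \<noteq> 0"
  shows
    "(\<forall>M :: real \<Rightarrow> real.
        ((\<forall>t\<in>{1 / \<Lambda>in^2 .. 1 / \<Lambda>1^2}. M t > 0 \<and>
            (M has_real_derivative
               (- inverse ((G_eff f0 f2 c (1 / sqrt t) * M t)^2)))
             (at t within {1 / \<Lambda>in^2 .. 1 / \<Lambda>1^2})))
        \<longrightarrow> (\<forall>\<Lambda>\<in>{\<Lambda>1..\<Lambda>in}.
              M (1 / \<Lambda>^2) =
                root 3 ((M (1 / \<Lambda>in^2))^3 - 2 / (3 * pi^2) *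
                  integral {\<Lambda>..\<Lambda>in}
                    (\<lambda>x. (192 * f2 * x^2 - 2 * f0 * c x)^2 / x^3))))
     \<and>
     (\<forall>M :: real \<Rightarrow> real.
        ((\<forall>t\<in>{1 / \<Lambda>in^2 .. 1 / \<Lambda>1^2}. M t > 0 \<and>
            (M has_real_derivative
               (- inverse ((G_effH f0 f2 c h (1 / sqrt t) * M t)^2)))
             (at t within {1 / \<Lambda>in^2 .. 1 / \<Lambda>1^2})))
        \<longrightarrow> (\<forall>\<Lambda>\<in>{\<Lambda>1..\<Lambda>in}.
              M (1 / \<Lambda>^2) =
                root 3 ((M (1 / \<Lambda>in^2))^3 - 6 *
                  integral {\<Lambda>..\<Lambda>in}
                    (\<lambda>x. (1 - 4 * pi / 3 * G_eff f0 f2 c x * h x)^2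
                          / (x^3 * (G_eff f0 f2 c x)^2)))))"
proof -
  have G_eff_cont: "continuous_on {\<Lambda>1..\<Lambda>in} (G_eff f0 f2 c)"
    unfolding G_eff_def[abs_def] using c_nz by (intro continuous_intros c_cont) auto
  have "continuous_on {\<Lambda>1..\<Lambda>in} (\<lambda>x. inverse (G_eff f0 f2 c x ^ 2))"
    unfolding inverse_G_eff_square by (intro continuous_intros c_cont) auto
  moreover have "continuous_on {\<Lambda>1..\<Lambda>in} (\<lambda>x. inverse (G_effH f0 f2 c h x ^ 2))"
    unfolding inverse_G_effH_square using c_nz
    by (intro continuous_intros G_eff_cont h_cont) (auto simp: G_eff_def)
  moreover have "6 * integral S (\<lambda>x. inverse (G_eff f0 f2 c x ^ 2) / x^3)
      = 2 / (3 * pi^2) * integral S (\<lambda>x. (192 * f2 * x^2 - 2 * f0 * c x)^2 / x^3)" for S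
    using integral_mult_right[of S "1 / (9 * pi^2)" "\<lambda>x. (192 * f2 * x^2 - 2 * f0 * c x)^2 / x^3"]
    by (simp add: inverse_G_eff_square)
  moreover have "(\<lambda>x. inverse (G_effH f0 f2 c h x ^ 2) / x^3)
      = (\<lambda>x. (1 - 4 * pi / 3 * G_eff f0 f2 c x * h x)^2 / (x^3 * (G_eff f0 f2 c x)^2))"
    by (simp add: inverse_G_effH_square mult.commute)
  ultimately show ?thesis
    using mass_eq_root_integral[OF L1 L1in, where G = "G_eff f0 f2 c"]
      mass_eq_root_integral[OF L1 L1in, where G = "G_effH f0 f2 c h"]
    by simp
qed

end
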